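(* Let $\{x^k\}_k$, $\{z^k\}_k$ be generated by the normal map-based stochastic proximal gradient method described in the context. Then for all integers $0\le m<n$ (and every sample, with the right-hand side interpreted as $+\infty$ when $L=\infty$), \[ \psi(x^n)-\psi(x^m)\le\Big(\frac{L}{2}-\frac1\lambda\Big)\|x^n-x^m\|^2+\langle F^\lambda_{\mathrm{nor}}(z^m),x^n-x^m\rangle+\frac1\lambda\langle z^n-z^m,x^n-x^m\rangle. \]
   Context: Let $\varphi:\mathbb{R}^d\to(-\infty,\infty]$ be convex, lower semicontinuous and proper, let $f:\mathbb{R}^d\to\mathbb{R}$ be continuously differentiable on an open set containing $\mathrm{dom}\,\varphi$, and set $\psi=f+\varphi$. For $\lambda>0$ let $\mathrm{prox}_{\lambda\varphi}(x)=\operatorname{argmin}_y\{\varphi(y)+\frac{1}{2\lambda}\|x-y\|^2\}$, $\mathrm{env}_{\lambda\varphi}$ the Moreau envelope with $\nabla\mathrm{env}_{\lambda\varphi}(x)=(x-\mathrm{prox}_{\lambda\varphi}(x))/\lambda$, and the normal map $F^\lambda_{\mathrm{nor}}(z)=\nabla f(\mathrm{prox}_{\lambda\varphi}(z))+\frac1\lambda(z-\mathrm{prox}_{\lambda\varphi}(z))$. Method: on a filtered probability space $(\Omega,\mathcal F,\{\mathcal F_k\}_k,\mathbb P)$, with $\lambda>0$, step sizes $\alpha_k>0$, deterministic $z^0$, $x^0=\mathrm{prox}_{\lambda\varphi}(z^0)$, and $\mathcal F_{k+1}$-measurable random vectors $g^k$, set $z^{k+1}=z^k-\alpha_k(g^k+\nabla\mathrm{env}_{\lambda\varphi}(z^k))$,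 $x^{k+1}=\mathrm{prox}_{\lambda\varphi}(z^{k+1})$. $L(\omega)=\sup_{\bar x\in\mathrm{cl}(\mathrm{conv}\{x^k(\omega)\}_k)}\mathrm{lip}\,\nabla f(\bar x)$, where $\mathrm{lip}\,\nabla f(\bar x)=\limsup_{x,x'\to\bar x,\,x\ne x'}\|\nabla f(x)-\nabla f(x')\|/\|x-x'\|$. *)

theory Defs
  imports "HOL-Analysis.Analysis" "HOL-Probability.Probability"
begin

definition edom :: "('a \<Rightarrow> ereal) \<Rightarrow> 'a set" where
  "edom \<phi> = {x. \<phi> x < \<infinity>}"

definition proper_fun :: "('a \<Rightarrow> ereal) \<Rightarrow> bool" where
  "proper_fun \<phi> \<longleftrightarrow> (\<forall>x. \<phi> x \<noteq> -\<infinity>) \<and> (\<exists>x. \<phi> x < \<infinity>)"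

definition ereal_convex :: "('a::real_vector \<Rightarrow> ereal) \<Rightarrow> bool" where
  "ereal_convex \<phi> \<longleftrightarrow> (\<forall>x y t. 0 < t \<and> t < 1 \<longrightarrow>
      \<phi> ((1 - t) *\<^sub>R x + t *\<^sub>R y) \<le> ereal (1 - t) * \<phi> x + ereal t * \<phi> y)"

definition lsc_fun :: "('a::topological_space \<Rightarrow> ereal) \<Rightarrow> bool" where
  "lsc_fun \<phi> \<longleftrightarrow> (\<forall>x. \<phi> x \<le> Liminf (at x) \<phi>)"

text \<open>Proximal operator: the (unique, for convex lsc proper phi) minimiser.\<close>
definition prox :: "real \<Rightarrow> ('a::real_normed_vector \<Rightarrow> ereal) \<Rightarrow> 'a \<Rightarrow> 'a" where
  "prox lam \<phi> x = (THE y. \<forall>y'. \<phi> y + ereal (norm (x - y)^2 / (2 * lam))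
                              \<le> \<phi> y' + ereal (norm (x - y')^2 / (2 * lam)))"

text \<open>Gradient of the Moreau envelope, via the standard formula.\<close>
definition grad_env :: "real \<Rightarrow> ('a::real_normed_vector \<Rightarrow> ereal) \<Rightarrow> 'a \<Rightarrow> 'a" where
  "grad_env lam \<phi> x = (1 / lam) *\<^sub>R (x - prox lam \<phi> x)"

definition F_nor :: "real \<Rightarrow> ('a \<Rightarrow> 'a) \<Rightarrow> ('a::real_normed_vector \<Rightarrow> ereal) \<Rightarrow> 'a \<Rightarrow> 'a" where
  "F_nor lam gf \<phi> z = gf (prox lam \<phi> z) + (1 / lam) *\<^sub>R (z - prox lam \<phi> z)"

definition lip :: "('a::real_normed_vector \<Rightarrow> 'b::real_normed_vector) \<Rightarrow> 'a \<Rightarrow> ereal" where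
  "lip G xb = Limsup (at (xb, xb) within {p. fst p \<noteq> snd p})
      (\<lambda>p. ereal (norm (G (fst p) - G (snd p)) / norm (fst p - snd p)))"

end

theory Submission
  imports Defs "HOL-Real_Asymp.Real_Asymp"
begin

(* The estimate is pathwise and involves only the two points a = prox(z^m) and b = prox(z^n).
   Optimality of b for the prox objective gives the variational inequality
   phi(b) + <z^n - b, y - b>/lambda <= phi(y), which at y = a bounds phi(b) - phi(a).  The segment
   [a, b] lies in dom phi and in the hull over which L is taken, so grad f is (L + eps)-Lipschitz
   along it and the descent lemma bounds f(b) - f(a) - <grad f(a), b - a>.  Adding both bounds and
   writing F_nor(z^m) = grad f(a) + (z^m - a)/lambda gives the claim.  That prox is well defined
   for a convex, lsc, proper phi follows from a minorant of linear growth, which makes the prox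
   objective coercive. *)

section \<open>Lower semicontinuous and convex extended-real functions\<close>

lemma lsc_attains_min_on_compact:
  fixes h :: "'a::topological_space \<Rightarrow> 'b::linorder"
  assumes "compact K" "K \<noteq> {}"
    and lsc: "\<And>x c. x \<in> K \<Longrightarrow> c < h x \<Longrightarrow> \<forall>\<^sub>F y in nhds x. c < h y"
  shows "\<exists>p\<in>K. \<forall>y\<in>K. h p \<le> h y"
proof (rule ccontr)
  \<comment> \<open>Every point is beaten by another one, and hence on a whole neighbourhood; among finitely
    many such neighbourhoods covering K, the smallest of the beating values is beaten again.\<close>
  assume "\<not> ?thesis"
  then obtain better where better: "\<And>p. p \<in> K \<Longrightarrow> better p \<in> K \<and> h (better p) < h p"
    by (metis not_le_imp_less)
  have "\<forall>p\<in>K. \<exists>N. open N \<and> p \<in> N \<and> (\<forall>y\<in>N. h (better p) < h y)"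
    using lsc better by (simp add: eventually_nhds)
  then obtain N where N: "\<And>p. p \<in> K \<Longrightarrow> open (N p) \<and> p \<in> N p \<and> (\<forall>y\<in>N p. h (better p) < h y)"
    by metis
  obtain T where T: "T \<subseteq> K" "finite T" "K \<subseteq> (\<Union>p\<in>T. N p)"
    using compactE_image[OF \<open>compact K\<close>, of K N] N by blast
  then have "T \<noteq> {}" using \<open>K \<noteq> {}\<close> by blast
  then obtain q where q: "q \<in> T" "\<And>q'. q' \<in> T \<Longrightarrow> h (better q) \<le> h (better q')"
    using ex_min_if_finite[of "(\<lambda>p. h (better p)) ` T"] \<open>finite T\<close> by (auto simp: not_less)
  obtain q' where "q' \<in> T" "better q \<in> N q'"
    using T better[of q] q(1) by blast
  then have "h (better q') < h (better q)" using N T(1) by blast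
  with q(2)[OF \<open>q' \<in> T\<close>] show False by simp
qed

lemma lsc_funD:
  assumes "lsc_fun \<phi>" "c < \<phi> x"
  shows "\<forall>\<^sub>F y in nhds x. c < \<phi> y"
  using assms by (metis eventually_nhds_conv_at less_LiminfD lsc_fun_def order_less_le_trans)

lemma proper_fun_not_MInf: "proper_fun \<phi> \<Longrightarrow> \<phi> x \<noteq> -\<infinity>"
  by (simp add: proper_fun_def)

lemma lsc_bounded_below_on_compact:
  assumes "lsc_fun \<phi>" "\<And>x. \<phi> x \<noteq> -\<infinity>" "compact K"
  shows "\<exists>B. \<forall>y\<in>K. ereal B \<le> \<phi> y"
proof (cases "K = {}")
  case False
  then obtain p where "p \<in> K" "\<forall>y\<in>K. \<phi> p \<le> \<phi> y"
    using lsc_attains_min_on_compact[OF \<open>compact K\<close>] lsc_funD[OF assms(1)] by blast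
  moreover have "ereal (real_of_ereal (\<phi> p)) \<le> \<phi> p"
    using assms(2)[of p] by (cases "\<phi> p") auto
  ultimately show ?thesis by (meson order_trans)
qed simp

lemma ereal_convex_convex_edom:
  assumes "ereal_convex \<phi>"
  shows "convex (edom \<phi>)"
  unfolding convex_alt
proof (intro ballI allI impI)
  fix x y and u :: real
  assume xy: "x \<in> edom \<phi>" "y \<in> edom \<phi>" and u: "0 \<le> u \<and> u \<le> 1"
  show "(1 - u) *\<^sub>R x + u *\<^sub>R y \<in> edom \<phi>"
  proof (cases "u = 0 \<or> u = 1")
    case False
    then have "\<phi> ((1 - u) *\<^sub>R x + u *\<^sub>R y) \<le> ereal (1 - u) * \<phi> x + ereal u * \<phi> y"
      using assms u unfolding ereal_convex_def by auto
    also have "\<dots> < \<infinity>" using xy u by (simp add: edom_def ereal_mult_less_right)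
    finally show ?thesis by (simp add: edom_def)
  qed (use xy in auto)
qed

section \<open>The proximal operator\<close>

definition prox_objective :: "real \<Rightarrow> ('a::real_normed_vector \<Rightarrow> ereal) \<Rightarrow> 'a \<Rightarrow> 'a \<Rightarrow> ereal" where
  "prox_objective lam \<phi> z y = \<phi> y + ereal (norm (z - y)^2 / (2 * lam))"

lemma prox_eq_The: "prox lam \<phi> z = (THE p. \<forall>y. prox_objective lam \<phi> z p \<le> prox_objective lam \<phi> z y)"
  by (simp add: prox_def prox_objective_def)

context
  fixes \<phi> :: "'a::euclidean_space \<Rightarrow> ereal"
  assumes conv: "ereal_convex \<phi>" and lsc: "lsc_fun \<phi>" and proper: "proper_fun \<phi>"
begin

lemma convex_lsc_linear_minorant:
  assumes y0: "\<phi> y0 < \<infinity>"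
  obtains B C where "C \<ge> 0" "\<And>y. ereal (B - C * norm (y - y0)) \<le> \<phi> y"
proof -
  obtain B where B: "\<And>y. y \<in> cball y0 1 \<Longrightarrow> ereal B \<le> \<phi> y"
    using lsc_bounded_below_on_compact[OF lsc proper_fun_not_MInf[OF proper] compact_cball] by blast
  obtain p0 where p0: "\<phi> y0 = ereal p0"
    using y0 proper_fun_not_MInf[OF proper] by (cases "\<phi> y0") auto
  have "B \<le> p0" using B[of y0] p0 by simp
  show thesis
  proof
    show "p0 - B \<ge> 0" using \<open>B \<le> p0\<close> by simp
    fix y
    define r where "r = norm (y - y0)"
    show "ereal (B - (p0 - B) * norm (y - y0)) \<le> \<phi> y"
    proof (cases "r \<le> 1")
      case True
      then have "ereal B \<le> \<phi> y" using B by (simp add: r_def dist_norm norm_minus_commute)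
      moreover have "B - (p0 - B) * r \<le> B" using \<open>B \<le> p0\<close> by (simp add: r_def)
      ultimately show ?thesis unfolding r_def by (meson ereal_less_eq(3) order_trans)
    next
      case False
      \<comment> \<open>Convexity along the ray from y0 through y, compared at the point at distance 1 from y0.\<close>
      define t where "t = 1 / r"
      have t: "0 < t" "t < 1" using False by (auto simp: t_def)
      define w where "w = (1 - t) *\<^sub>R y0 + t *\<^sub>R y"
      have "w - y0 = t *\<^sub>R (y - y0)" by (simp add: w_def algebra_simps)
      then have "norm (w - y0) = 1" using False t by (simp add: t_def r_def)
      then have "ereal B \<le> \<phi> w" using B by (simp add: dist_norm norm_minus_commute)
      also have "\<phi> w \<le> ereal (1 - t) * \<phi> y0 + ereal t * \<phi> y"
        using conv t unfolding ereal_convex_def w_def by blast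
      finally have *: "ereal B \<le> ereal ((1 - t) * p0) + ereal t * \<phi> y" using p0 by simp
      show ?thesis
      proof (cases "\<phi> y")
        case (real py)
        with * have "r * B \<le> r * ((1 - t) * p0 + t * py)" using False by simp
        also have "\<dots> = (r - 1) * p0 + py" using False by (simp add: t_def algebra_simps)
        finally show ?thesis using real \<open>B \<le> p0\<close> by (simp add: r_def algebra_simps)
      qed (use proper_fun_not_MInf[OF proper] in auto)
    qed
  qed
qed

lemma prox_objective_lsc:
  assumes "lam > 0" "c < prox_objective lam \<phi> z x"
  shows "\<forall>\<^sub>F y in nhds x. c < prox_objective lam \<phi> z y"
proof (cases c)
  case (real c')
  define q where "q y = norm (z - y)^2 / (2 * lam)" for y
  have "ereal (c' - q x) < \<phi> x"
    using assms(2) real proper_fun_not_MInf[OF proper, of x]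
    by (cases "\<phi> x") (auto simp: prox_objective_def q_def)
  then obtain c2 where c2: "ereal (c' - q x) < ereal c2" "ereal c2 < \<phi> x"
    using ereal_dense2 by blast
  have "\<forall>\<^sub>F y in nhds x. ereal c2 < \<phi> y" by (rule lsc_funD[OF lsc c2(2)])
  moreover have "\<forall>\<^sub>F y in nhds x. c' - c2 < q y"
  proof (rule order_tendstoD(1))
    have "isCont q x" unfolding q_def using assms(1) by (intro continuous_intros) auto
    then show "(q \<longlongrightarrow> q x) (nhds x)" by (simp add: isCont_def tendsto_at_iff_tendsto_nhds)
  qed (use c2(1) in simp)
  ultimately show ?thesis
  proof eventually_elim
    case (elim y)
    then show ?case
      using real proper_fun_not_MInf[OF proper, of y]
      by (cases "\<phi> y") (auto simp: prox_objective_def q_def)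
  qed
qed (use assms proper_fun_not_MInf[OF proper] in \<open>auto simp: prox_objective_def\<close>)

lemma prox_objective_coercive:
  assumes lam: "lam > 0" and y0: "\<phi> y0 < \<infinity>"
  obtains R where "\<And>y. R < norm (y - y0) \<Longrightarrow> prox_objective lam \<phi> z y0 < prox_objective lam \<phi> z y"
proof -
  obtain B C where BC: "\<And>y. ereal (B - C * norm (y - y0)) \<le> \<phi> y"
    using convex_lsc_linear_minorant[OF y0] by blast
  obtain p0 where p0: "\<phi> y0 = ereal p0"
    using y0 proper_fun_not_MInf[OF proper] by (cases "\<phi> y0") auto
  define a where "a = norm (z - y0)"
  define M where "M = p0 + a^2 / (2 * lam)"
  have "filterlim (\<lambda>r. B - C * r + (r - a)^2 / (2 * lam)) at_top at_top"
    using lam by real_asymp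
  then obtain R where R: "\<And>r. R \<le> r \<Longrightarrow> M < B - C * r + (r - a)^2 / (2 * lam)"
    by (auto simp: filterlim_at_top_dense eventually_at_top_linorder)
  show thesis
  proof
    fix y assume y: "max R a < norm (y - y0)"
    define r where "r = norm (y - y0)"
    have "r - a \<le> norm (z - y)"
      unfolding r_def a_def by (metis norm_diff_triangle_le norm_minus_commute add.commute diff_le_eq order_refl)
    then have "(r - a)^2 \<le> norm (z - y)^2"
      using y by (intro power_mono) (auto simp: r_def)
    then have "(r - a)^2 / (2 * lam) \<le> norm (z - y)^2 / (2 * lam)"
      using lam by (simp add: divide_right_mono)
    then have "M < B - C * r + norm (z - y)^2 / (2 * lam)"
      using R[of r] y by (simp add: r_def)
    then have "ereal M < ereal (B - C * r) + ereal (norm (z - y)^2 / (2 * lam))" by simp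
    also have "\<dots> \<le> prox_objective lam \<phi> z y"
      unfolding prox_objective_def r_def by (intro add_right_mono BC)
    finally show "prox_objective lam \<phi> z y0 < prox_objective lam \<phi> z y"
      by (simp add: prox_objective_def p0 M_def a_def)
  qed
qed

lemma prox_objective_has_min:
  assumes lam: "lam > 0"
  shows "\<exists>p. \<forall>y. prox_objective lam \<phi> z p \<le> prox_objective lam \<phi> z y"
proof -
  obtain y0 where y0: "\<phi> y0 < \<infinity>" using proper unfolding proper_fun_def by auto
  obtain R where R: "\<And>y. R < norm (y - y0) \<Longrightarrow> prox_objective lam \<phi> z y0 < prox_objective lam \<phi> z y"
    using prox_objective_coercive[OF lam y0] by blast
  \<comment> \<open>Outside the ball the objective exceeds its value at its centre, so a minimiser over the ball is global.\<close>
  obtain p where p: "p \<in> cball y0 (max R 0)"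
      "\<And>y. y \<in> cball y0 (max R 0) \<Longrightarrow> prox_objective lam \<phi> z p \<le> prox_objective lam \<phi> z y"
    using lsc_attains_min_on_compact[OF compact_cball, of y0 "max R 0" "prox_objective lam \<phi> z"]
      prox_objective_lsc[OF lam] by auto
  have "prox_objective lam \<phi> z p \<le> prox_objective lam \<phi> z y" for y
  proof (cases "y \<in> cball y0 (max R 0)")
    case False
    then have "prox_objective lam \<phi> z y0 < prox_objective lam \<phi> z y"
      by (intro R) (auto simp: dist_norm norm_minus_commute)
    moreover have "prox_objective lam \<phi> z p \<le> prox_objective lam \<phi> z y0" by (rule p(2)) simp
    ultimately show ?thesis by simp
  qed (rule p(2))
  then show ?thesis by blast
qed

lemma prox_objective_min_finite:
  assumes min: "\<And>y. prox_objective lam \<phi> z p \<le> prox_objective lam \<phi> z y"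
  shows "\<phi> p < \<infinity>"
proof -
  obtain y0 where "\<phi> y0 < \<infinity>" using proper unfolding proper_fun_def by auto
  then have "prox_objective lam \<phi> z y0 < \<infinity>" by (simp add: prox_objective_def)
  then have "prox_objective lam \<phi> z p < \<infinity>" using min[of y0] le_less_trans by blast
  then show ?thesis by (simp add: prox_objective_def)
qed

lemma prox_objective_min_variational:
  assumes lam: "lam > 0"
    and min: "\<And>y. prox_objective lam \<phi> z p \<le> prox_objective lam \<phi> z y"
  shows "\<phi> p + ereal (inner (z - p) (y - p) / lam) \<le> \<phi> y"
proof (cases "\<phi> y")
  case (real py)
  obtain pp where pp: "\<phi> p = ereal pp"
    using prox_objective_min_finite[OF min] proper_fun_not_MInf[OF proper] by (cases "\<phi> p") auto
  define v where "v = z - p"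
  define u where "u = y - p"
  \<comment> \<open>Compare p with the points of the segment towards y, then let them tend to p.\<close>
  have "pp - py + inner v u / lam \<le> t * (norm u^2 / (2 * lam))" if t: "0 < t" "t < 1" for t
  proof -
    define w where "w = (1 - t) *\<^sub>R p + t *\<^sub>R y"
    have "\<phi> w \<le> ereal (1 - t) * \<phi> p + ereal t * \<phi> y"
      using conv t unfolding ereal_convex_def w_def by blast
    then obtain pw where pw: "\<phi> w = ereal pw" "pw \<le> (1 - t) * pp + t * py"
      using pp real proper_fun_not_MInf[OF proper, of w] by (cases "\<phi> w") auto
    have "z - w = v - t *\<^sub>R u" by (simp add: w_def v_def u_def algebra_simps)
    then have "norm (z - w)^2 = inner (v - t *\<^sub>R u) (v - t *\<^sub>R u)"
      by (simp add: power2_norm_eq_inner)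
    also have "\<dots> = norm v^2 - 2 * t * inner v u + t^2 * norm u^2"
      by (simp add: power2_norm_eq_inner inner_diff_left inner_diff_right inner_commute[of u v]
          power2_eq_square[of t] algebra_simps)
    finally have "norm (z - w)^2 / (2 * lam)
        = norm v^2 / (2 * lam) - t * (inner v u / lam) + t * (t * (norm u^2 / (2 * lam)))"
      using lam by (simp add: field_simps power2_eq_square)
    moreover have "pp + norm v^2 / (2 * lam) \<le> pw + norm (z - w)^2 / (2 * lam)"
      using min[of w] pp pw by (simp add: prox_objective_def v_def)
    moreover have "pw \<le> pp - t * pp + t * py" using pw(2) by (simp add: algebra_simps)
    ultimately have "t * (pp - py + inner v u / lam) \<le> t * (t * (norm u^2 / (2 * lam)))"
      by (simp add: distrib_left right_diff_distrib)
    then show ?thesis using t(1) by (rule mult_left_le_imp_le)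
  qed
  then have "pp - py + inner v u / lam \<le> 0 * (norm u^2 / (2 * lam))"
    by (intro tendsto_lowerbound[of "\<lambda>t. t * (norm u^2 / (2 * lam))" _ "at_right 0"] tendsto_intros)
      (auto intro: eventually_mono[OF eventually_at_right_real[of 0 1]])
  then show ?thesis using pp real by (simp add: v_def u_def)
qed (use proper_fun_not_MInf[OF proper] in auto)

lemma prox_objective_min_unique:
  assumes lam: "lam > 0"
    and p: "\<And>y. prox_objective lam \<phi> z p \<le> prox_objective lam \<phi> z y"
    and q: "\<And>y. prox_objective lam \<phi> z q \<le> prox_objective lam \<phi> z y"
  shows "q = p"
proof -
  obtain a b where a: "\<phi> p = ereal a" and b: "\<phi> q = ereal b"
    using prox_objective_min_finite[OF p] prox_objective_min_finite[OF q] proper_fun_not_MInf[OF proper]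
    by (metis ereal_cases less_ereal.simps(4) order_less_imp_not_eq)
  have "a + inner (z - p) (q - p) / lam \<le> b" "b + inner (z - q) (p - q) / lam \<le> a"
    using prox_objective_min_variational[OF lam p, of q] prox_objective_min_variational[OF lam q, of p] a b
    by simp_all
  \<comment> \<open>Adding the two variational inequalities leaves the squared distance of p and q.\<close>
  then have "(inner (z - p) (q - p) + inner (z - q) (p - q)) / lam \<le> 0"
    by (simp add: add_divide_distrib)
  moreover have "inner (z - p) (q - p) + inner (z - q) (p - q) = inner (q - p) (q - p)"
    by (simp add: inner_diff_left inner_diff_right inner_commute)
  ultimately have "inner (q - p) (q - p) \<le> 0" using lam by (simp add: divide_le_0_iff)
  then show ?thesis by (metis antisym inner_eq_zero_iff inner_ge_zero right_minus_eq)
qed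

lemma prox_minimises:
  assumes "lam > 0"
  shows "prox_objective lam \<phi> z (prox lam \<phi> z) \<le> prox_objective lam \<phi> z y"
proof -
  have "\<exists>!p. \<forall>y. prox_objective lam \<phi> z p \<le> prox_objective lam \<phi> z y"
    using prox_objective_has_min[OF assms] prox_objective_min_unique[OF assms] by blast
  then show ?thesis unfolding prox_eq_The by (rule theI'[THEN spec])
qed

lemma prox_finite: "lam > 0 \<Longrightarrow> \<phi> (prox lam \<phi> z) < \<infinity>"
  using prox_objective_min_finite prox_minimises by blast

lemma prox_variational_ineq:
  "lam > 0 \<Longrightarrow> \<phi> (prox lam \<phi> z) + ereal (inner (z - prox lam \<phi> z) (y - prox lam \<phi> z) / lam) \<le> \<phi> y"
  using prox_objective_min_variational prox_minimises by blast

end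

section \<open>The descent lemma under a bound on the local Lipschitz modulus\<close>

lemma add_scaleR_diff_in_closed_segment: "t \<in> {0..1} \<Longrightarrow> a + t *\<^sub>R (b - a) \<in> closed_segment a b"
  unfolding in_segment by (intro exI[of _ t]) (auto simp: algebra_simps)

lemma lip_less_imp_lipschitz_near:
  fixes G :: "'a::real_normed_vector \<Rightarrow> 'b::real_normed_vector"
  assumes "lip G p < ereal K"
  obtains \<delta> where "\<delta> > 0" "\<And>u v. u \<in> ball p \<delta> \<Longrightarrow> v \<in> ball p \<delta> \<Longrightarrow> norm (G u - G v) \<le> K * norm (u - v)"
proof -
  have "\<forall>\<^sub>F q in at (p, p) within {q. fst q \<noteq> snd q}.
      ereal (norm (G (fst q) - G (snd q)) / norm (fst q - snd q)) < ereal K"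
    using assms unfolding lip_def by (rule Limsup_lessD)
  then obtain d where d: "d > 0" "\<And>q. fst q \<noteq> snd q \<Longrightarrow> q \<noteq> (p, p) \<Longrightarrow> dist q (p, p) < d \<Longrightarrow>
      norm (G (fst q) - G (snd q)) / norm (fst q - snd q) < K"
    unfolding eventually_at by auto
  show thesis
  proof
    show "d / 2 > 0" using d by simp
    fix u v assume uv: "u \<in> ball p (d / 2)" "v \<in> ball p (d / 2)"
    show "norm (G u - G v) \<le> K * norm (u - v)"
    proof (cases "u = v")
      case False
      have "dist (u, v) (p, p) \<le> dist u p + dist v p"
        unfolding dist_Pair_Pair using sqrt_sum_squares_le_sum_abs[of "dist u p" "dist v p"] by simp
      also have "\<dots> < d" using uv by (simp add: dist_commute)
      finally have "norm (G u - G v) / norm (u - v) < K"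
        using d(2)[of "(u, v)"] False by auto
      then show ?thesis using False by (simp add: divide_less_eq less_imp_le)
    qed simp
  qed
qed

lemma lip_less_imp_lipschitz_along_segment:
  fixes G :: "'a::real_normed_vector \<Rightarrow> 'b::real_normed_vector"
  assumes cont: "continuous_on (closed_segment a b) G"
    and lip: "\<And>p. p \<in> closed_segment a b \<Longrightarrow> lip G p < ereal K"
    and t: "t \<in> {0..1}"
  shows "norm (G (a + t *\<^sub>R (b - a)) - G a) \<le> K * t * norm (b - a)"
proof -
  define d where "d = b - a"
  define \<gamma> where "\<gamma> s = a + s *\<^sub>R d" for s
  have \<gamma>_seg: "\<gamma> s \<in> closed_segment a b" if "s \<in> {0..1}" for s
    using add_scaleR_diff_in_closed_segment[OF that] by (simp add: \<gamma>_def d_def)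
  have "dist ((G \<circ> \<gamma>) t) ((G \<circ> \<gamma>) 0) \<le> (K * norm d) * (t - 0)"
  proof (rule locally_lipschitz_imp_lipschitz_aux)
    show "continuous_on {0..t} (G \<circ> \<gamma>)"
      using t \<gamma>_seg by (intro continuous_on_compose continuous_on_subset[OF cont])
        (auto simp: \<gamma>_def intro!: continuous_intros)
    fix s assume s: "s \<in> {0..<t}"
    then have "\<gamma> s \<in> closed_segment a b" using t \<gamma>_seg by simp
    then obtain \<delta> where \<delta>: "\<delta> > 0"
        "\<And>u v. u \<in> ball (\<gamma> s) \<delta> \<Longrightarrow> v \<in> ball (\<gamma> s) \<delta> \<Longrightarrow> norm (G u - G v) \<le> K * norm (u - v)"
      using lip lip_less_imp_lipschitz_near by metis
    define e where "e = \<delta> / (norm d + 1)"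
    have "0 < norm d + 1" using norm_ge_zero[of d] by linarith
    then have e: "0 < e" "e * (norm d + 1) = \<delta>" using \<delta>(1) by (simp_all add: e_def)
    define s' where "s' = min t (s + e)"
    have s': "s < s'" "s' \<le> t" using s e(1) by (auto simp: s'_def)
    have "norm (\<gamma> s' - \<gamma> s) = (s' - s) * norm d"
      using s' by (simp add: \<gamma>_def flip: scaleR_diff_left)
    also have "\<dots> \<le> e * norm d"
      by (intro mult_right_mono) (auto simp: s'_def)
    also have "\<dots> < \<delta>" using e by (simp add: distrib_left flip: e(2))
    finally have "\<gamma> s' \<in> ball (\<gamma> s) \<delta>" by (simp add: dist_norm norm_minus_commute)
    then have "norm (G (\<gamma> s') - G (\<gamma> s)) \<le> K * norm (\<gamma> s' - \<gamma> s)"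
      using \<delta> by simp
    then have "dist ((G \<circ> \<gamma>) s') ((G \<circ> \<gamma>) s) \<le> K * norm d * (s' - s)"
      using \<open>norm (\<gamma> s' - \<gamma> s) = (s' - s) * norm d\<close> by (simp add: dist_norm mult_ac)
    then show "\<exists>s'\<in>{s<..t}. dist ((G \<circ> \<gamma>) s') ((G \<circ> \<gamma>) s) \<le> K * norm d * (s' - s)"
      using s' by (intro bexI[of _ s']) auto
  qed (use t in simp)
  then show ?thesis by (simp add: \<gamma>_def d_def dist_norm mult_ac)
qed

lemma descent_lemma_segment:
  fixes f :: "'a::real_inner \<Rightarrow> real"
  assumes seg: "closed_segment a b \<subseteq> U" and grad: "\<And>y. y \<in> U \<Longrightarrow> GDERIV f y :> gf y"
    and bnd: "\<And>t. t \<in> {0..1} \<Longrightarrow> norm (gf (a + t *\<^sub>R (b - a)) - gf a) \<le> K * t * norm (b - a)"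
  shows "f b - f a - inner (gf a) (b - a) \<le> K / 2 * norm (b - a)^2"
proof -
  define d where "d = b - a"
  define g where "g t = f (a + t *\<^sub>R d) - t * inner (gf a) d - K / 2 * t^2 * norm d^2" for t
  have "\<exists>D. (g has_real_derivative D) (at t) \<and> D \<le> 0" if t: "0 \<le> t" "t \<le> 1" for t
  proof -
    have "a + t *\<^sub>R d \<in> closed_segment a b"
      unfolding d_def using t by (intro add_scaleR_diff_in_closed_segment) simp
    then have "(f has_derivative (\<lambda>h. inner h (gf (a + t *\<^sub>R d)))) (at (a + t *\<^sub>R d))"
      using seg grad unfolding gderiv_def by blast
    moreover have "((\<lambda>t. a + t *\<^sub>R d) has_derivative (\<lambda>h. h *\<^sub>R d)) (at t)"
      by (auto intro!: derivative_eq_intros)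
    ultimately have "((\<lambda>t. f (a + t *\<^sub>R d)) has_derivative (\<lambda>h. inner (h *\<^sub>R d) (gf (a + t *\<^sub>R d)))) (at t)"
      by (rule has_derivative_compose[rotated])
    moreover have "(\<lambda>h. inner (h *\<^sub>R d) (gf (a + t *\<^sub>R d))) = (*) (inner d (gf (a + t *\<^sub>R d)))"
      by (simp add: fun_eq_iff)
    ultimately have "((\<lambda>t. f (a + t *\<^sub>R d)) has_real_derivative inner d (gf (a + t *\<^sub>R d))) (at t)"
      by (simp add: has_field_derivative_def)
    then have "(g has_real_derivative inner d (gf (a + t *\<^sub>R d) - gf a) - K * t * norm d^2) (at t)"
      unfolding g_def
      by (auto intro!: derivative_eq_intros simp: inner_diff_right inner_commute[of "gf a" d])
    moreover have "inner d (gf (a + t *\<^sub>R d) - gf a) \<le> norm d * norm (gf (a + t *\<^sub>R d) - gf a)"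
      by (rule norm_cauchy_schwarz)
    moreover have "norm d * norm (gf (a + t *\<^sub>R d) - gf a) \<le> norm d * (K * t * norm d)"
      using bnd[of t] t by (intro mult_left_mono) (auto simp: d_def)
    moreover have "norm d * (K * t * norm d) = K * t * norm d^2" by (simp add: power2_eq_square)
    ultimately show ?thesis by force
  qed
  then have "g 1 \<le> g 0" by (intro DERIV_nonpos_imp_nonincreasing[of 0 1 g]) auto
  then show ?thesis by (simp add: g_def d_def)
qed

lemma descent_lemma_lip:
  fixes f :: "'a::euclidean_space \<Rightarrow> real"
  assumes seg: "closed_segment a b \<subseteq> U" and grad: "\<And>y. y \<in> U \<Longrightarrow> GDERIV f y :> gf y"
    and cont: "continuous_on U gf" and lip: "\<And>p. p \<in> closed_segment a b \<Longrightarrow> lip gf p \<le> ereal \<Lambda>"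
  shows "f b - f a - inner (gf a) (b - a) \<le> \<Lambda> / 2 * norm (b - a)^2"
proof (rule tendsto_lowerbound)
  show "((\<lambda>K. K / 2 * norm (b - a)^2) \<longlongrightarrow> \<Lambda> / 2 * norm (b - a)^2) (at_right \<Lambda>)"
    by (auto intro!: tendsto_intros)
  show "\<forall>\<^sub>F K in at_right \<Lambda>. f b - f a - inner (gf a) (b - a) \<le> K / 2 * norm (b - a)^2"
    using eventually_at_right_less
  proof eventually_elim
    case (elim K)
    then have "lip gf p < ereal K" if "p \<in> closed_segment a b" for p
      using lip[OF that] by (simp add: le_less_trans)
    show ?case
      using descent_lemma_segment[OF seg grad] lip_less_imp_lipschitz_along_segment[OF continuous_on_subset[OF cont seg]]
        \<open>\<And>p. p \<in> closed_segment a b \<Longrightarrow> lip gf p < ereal K\<close> by blast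
  qed
qed simp

section \<open>The sufficient decrease estimate\<close>

lemma normal_map_descent:
  fixes \<phi> :: "'a::euclidean_space \<Rightarrow> ereal"
  assumes conv: "ereal_convex \<phi>" and lsc: "lsc_fun \<phi>" and proper: "proper_fun \<phi>" and lam: "lam > 0"
    and a: "a = prox lam \<phi> za" and b: "b = prox lam \<phi> zb"
    and descent: "f b - f a - inner (gf a) (b - a) \<le> \<Lambda> / 2 * norm (b - a)^2"
  shows "(ereal (f b) + \<phi> b) - (ereal (f a) + \<phi> a)
    \<le> ereal ((\<Lambda> / 2 - 1 / lam) * norm (b - a)^2 + inner (F_nor lam gf \<phi> za) (b - a)
             + (1 / lam) * inner (zb - za) (b - a))"
proof -
  obtain pa pb where pa: "\<phi> a = ereal pa" and pb: "\<phi> b = ereal pb"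
    using prox_finite[OF conv lsc proper lam] proper_fun_not_MInf[OF proper] a b
    by (metis ereal_cases less_ereal.simps(4) order_less_imp_not_eq)
  have "pb + inner (zb - b) (a - b) / lam \<le> pa"
    using prox_variational_ineq[OF conv lsc proper lam, of zb a] b pa pb by simp
  moreover have "inner (zb - b) (a - b) = - inner (zb - b) (b - a)"
    by (simp add: inner_diff_right)
  ultimately have "pb - pa \<le> inner (zb - b) (b - a) / lam" by simp
  moreover have "inner (F_nor lam gf \<phi> za) (b - a) + (1 / lam) * inner (zb - za) (b - a)
      = inner (gf a) (b - a) + inner (zb - b) (b - a) / lam + (1 / lam) * norm (b - a)^2"
    using lam by (simp add: F_nor_def a[symmetric] inner_add_left inner_diff_left power2_norm_eq_inner
        field_simps)
  ultimately show ?thesis using descent pa pb by (simp add: algebra_simps)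
qed

theorem lemma2p8:
  fixes \<phi> :: "'a::euclidean_space \<Rightarrow> ereal"
    and f :: "'a \<Rightarrow> real" and gf :: "'a \<Rightarrow> 'a"
    and M :: "'w measure" and F :: "nat \<Rightarrow> 'w measure"
    and lam :: real and \<alpha> :: "nat \<Rightarrow> real" and z0 :: 'a
    and g :: "nat \<Rightarrow> 'w \<Rightarrow> 'a" and z x :: "nat \<Rightarrow> 'w \<Rightarrow> 'a"
    and L :: "'w \<Rightarrow> ereal"
  assumes conv: "ereal_convex \<phi>" and lsc: "lsc_fun \<phi>" and proper: "proper_fun \<phi>"
    and U: "\<exists>U. open U \<and> edom \<phi> \<subseteq> U \<and> (\<forall>y\<in>U. GDERIV f y :> gf y) \<and> continuous_on U gf"
    and Mprob: "prob_space M"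
    and filt: "\<And>k. subalgebra M (F k)" "\<And>i j. i \<le> j \<Longrightarrow> sets (F i) \<subseteq> sets (F j)"
    and lam: "lam > 0" and alpha: "\<And>k. \<alpha> k > 0"
    and g_meas: "\<And>k. g k \<in> borel_measurable (F (Suc k))"
    and z0: "\<And>\<omega>. z 0 \<omega> = z0"
    and zrec: "\<And>k \<omega>. z (Suc k) \<omega> = z k \<omega> - \<alpha> k *\<^sub>R (g k \<omega> + grad_env lam \<phi> (z k \<omega>))"
    and xdef: "\<And>k \<omega>. x k \<omega> = prox lam \<phi> (z k \<omega>)"
    and Ldef: "\<And>\<omega>. L \<omega> = (SUP xb \<in> closure (convex hull (range (\<lambda>k. x k \<omega>))). lip gf xb)"
  shows "\<forall>\<omega>\<in>space M. \<forall>m n. m < n \<longrightarrow>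
     L \<omega> = \<infinity> \<or>
     (ereal (f (x n \<omega>)) + \<phi> (x n \<omega>)) - (ereal (f (x m \<omega>)) + \<phi> (x m \<omega>))
       \<le> ereal ((real_of_ereal (L \<omega>) / 2 - 1 / lam) * norm (x n \<omega> - x m \<omega>)^2
                + inner (F_nor lam gf \<phi> (z m \<omega>)) (x n \<omega> - x m \<omega>)
                + (1 / lam) * inner (z n \<omega> - z m \<omega>) (x n \<omega> - x m \<omega>))"
proof -
  obtain V where V: "edom \<phi> \<subseteq> V" "\<And>y. y \<in> V \<Longrightarrow> GDERIV f y :> gf y" "continuous_on V gf"
    using U by blast
  have "x k \<omega> \<in> edom \<phi>" for k \<omega>
    using prox_finite[OF conv lsc proper lam] by (simp add: xdef edom_def)
  then have seg: "closed_segment (x m \<omega>) (x n \<omega>) \<subseteq> V" for m n \<omega>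
    using closed_segment_subset[OF _ _ ereal_convex_convex_edom[OF conv]] V(1) by blast
  have descent: "f (x n \<omega>) - f (x m \<omega>) - inner (gf (x m \<omega>)) (x n \<omega> - x m \<omega>)
      \<le> real_of_ereal (L \<omega>) / 2 * norm (x n \<omega> - x m \<omega>)^2" if "L \<omega> \<noteq> \<infinity>" for \<omega> m n
  proof (rule descent_lemma_lip[OF seg V(2,3)])
    \<comment> \<open>This also covers L = -\<infinity>, where real_of_ereal gives 0.\<close>
    have "L \<omega> \<le> ereal (real_of_ereal (L \<omega>))" using that by (cases "L \<omega>") auto
    moreover have "closed_segment (x m \<omega>) (x n \<omega>) \<subseteq> closure (convex hull (range (\<lambda>k. x k \<omega>)))"
      by (intro closed_segment_subset_convex_hull order_trans[OF _ closure_subset]) (auto intro: hull_inc)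
    ultimately show "lip gf p \<le> ereal (real_of_ereal (L \<omega>))"
      if "p \<in> closed_segment (x m \<omega>) (x n \<omega>)" for p
      using that unfolding Ldef by (meson SUP_upper order_trans subsetD)
  qed
  show ?thesis
    unfolding disj_imp
    by (intro ballI allI impI normal_map_descent[OF conv lsc proper lam xdef xdef, where f = f and gf = gf]
        descent)
qed

end
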